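(* There are infinitely many positive integers $N$ for which there are no antipalindromic numbers $A,B$ (in base $2$) with $N=A/B$.
   Context: A positive integer $n$ is antipalindromic if its binary representation $w=w_1\cdots w_L$ (most significant digit first, no leading zeros) has even length $L$ and satisfies $w_i+w_{L+1-i}=1$ for all $i$. *)

theory Defs
  imports Main
begin

definition bin_len :: "nat \<Rightarrow> nat" where
  "bin_len n = (LEAST L. n < 2 ^ L)"

definition bin_digit :: "nat \<Rightarrow> nat \<Rightarrow> nat" where
  "bin_digit n j = (n div 2 ^ j) mod 2"

text \<open>With w_1 ... w_L the digits most significant first, w_i = bin_digit n (L - i).
  The condition w_i + w_(L+1-i) = 1 for all i in 1..L becomes the condition below.\<close>
definition antipalindromic :: "nat \<Rightarrow> bool" where
  "antipalindromic n \<longleftrightarrow> n > 0 \<and> even (bin_len n) \<and>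
     (\<forall>i\<in>{1..bin_len n}. bin_digit n (bin_len n - i) + bin_digit n (i - 1) = 1)"

end

theory Submission
  imports Defs "HOL-Library.Infinite_Set"
begin

text \<open>Every power of two \<open>N = 2^m\<close> with \<open>m > 0\<close> works. Let \<open>t\<close> be the position of the
  lowest set bit of an antipalindromic \<open>B\<close>. The antipalindromic condition pairs position \<open>t\<close>
  with position \<open>bin_len B - 1 - t\<close>, so the latter holds a 0. Multiplying by \<open>2^m\<close> shifts all
  digits up by \<open>m\<close>: position \<open>t\<close> of \<open>2^m B\<close> now holds a 0, while its partner position still
  holds the same 0 as before, so \<open>2^m B\<close> is not antipalindromic.\<close>

lemma less_two_power_bin_len: "n < 2 ^ bin_len n"
  unfolding bin_len_def by (rule LeastI_ex) (metis less_exp)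

lemma bin_len_pos: "n > 0 \<Longrightarrow> bin_len n > 0"
  using less_two_power_bin_len[of n] by (cases "bin_len n") auto

lemma two_power_bin_len_le:
  assumes "n > 0"
  shows "2 ^ (bin_len n - 1) \<le> n"
proof (rule ccontr)
  assume "\<not> 2 ^ (bin_len n - 1) \<le> n"
  then have "bin_len n \<le> bin_len n - 1"
    unfolding bin_len_def by (intro Least_le) simp
  with bin_len_pos[OF assms] show False by simp
qed

lemma bin_len_two_power_mult:
  assumes "n > 0"
  shows "bin_len (2 ^ m * n) = bin_len n + m"
  unfolding bin_len_def[of "2 ^ m * n"]
proof (rule Least_equality)
  show "2 ^ m * n < 2 ^ (bin_len n + m)"
    using less_two_power_bin_len[of n] by (simp add: power_add)
next
  fix L assume L: "2 ^ m * n < 2 ^ L"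
  show "bin_len n + m \<le> L"
  proof (rule ccontr)
    assume "\<not> bin_len n + m \<le> L"
    then have "L \<le> (bin_len n - 1) + m" using bin_len_pos[OF assms] by simp
    then have "(2::nat) ^ L \<le> 2 ^ m * 2 ^ (bin_len n - 1)"
      by (simp add: power_add[symmetric] add.commute)
    also have "\<dots> \<le> 2 ^ m * n" using two_power_bin_len_le[OF assms] by simp
    finally show False using L by simp
  qed
qed

lemma bin_digit_two_power_mult: "bin_digit (2 ^ m * n) (m + j) = bin_digit n j"
  unfolding bin_digit_def by (simp add: power_add div_mult2_eq)

lemma antipalindromic_digit_pair:
  assumes "antipalindromic n" and "j < bin_len n"
  shows "bin_digit n (bin_len n - Suc j) + bin_digit n j = 1"
proof -
  have "Suc j \<in> {1..bin_len n}" using assms(2) by simp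
  with assms(1) show ?thesis unfolding antipalindromic_def by fastforce
qed

lemma ex_two_power_mult_odd: "(n::nat) > 0 \<Longrightarrow> \<exists>t q. n = 2 ^ t * q \<and> odd q"
proof (induction n rule: less_induct)
  case (less n)
  show ?case
  proof (cases "even n")
    case True
    then obtain k where k: "n = 2 * k" by blast
    with less.prems less.IH[of k] obtain t q where "k = 2 ^ t * q" "odd q" by auto
    with k have "n = 2 ^ Suc t * q \<and> odd q" by simp
    then show ?thesis by blast
  next
    case False
    then have "n = 2 ^ 0 * n \<and> odd n" by simp
    then show ?thesis by blast
  qed
qed

lemma not_antipalindromic_two_power_mult:
  assumes "m > 0" and B: "antipalindromic B"
  shows "\<not> antipalindromic (2 ^ m * B)"
proof
  assume A: "antipalindromic (2 ^ m * B)"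
  have "B > 0" using B unfolding antipalindromic_def by simp
  then obtain t q where Bq: "B = 2 ^ t * q" and "odd q"
    using ex_two_power_mult_odd by blast
  have B_digit: "bin_digit B t = 1"
    unfolding bin_digit_def Bq using \<open>odd q\<close> by (simp add: odd_iff_mod_2_eq_one)
  have A_digit: "bin_digit (2 ^ m * B) t = 0"
    unfolding bin_digit_def Bq using \<open>m > 0\<close> by (simp add: power_add[symmetric])
  have "2 ^ t \<le> B" using Bq \<open>odd q\<close> by (cases q) auto
  also have "B < 2 ^ bin_len B" by (rule less_two_power_bin_len)
  finally have t: "t < bin_len B" by simp
  define p where "p = bin_len B - Suc t"
  have "bin_len (2 ^ m * B) - Suc t = m + p"
    using t bin_len_two_power_mult[OF \<open>B > 0\<close>] unfolding p_def by simp
  then have "bin_digit B p + bin_digit (2 ^ m * B) t = 1"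
    using antipalindromic_digit_pair[OF A, of t] t bin_len_two_power_mult[OF \<open>B > 0\<close>]
    by (simp add: bin_digit_two_power_mult)
  moreover have "bin_digit B p + bin_digit B t = 1"
    using antipalindromic_digit_pair[OF B t] unfolding p_def .
  ultimately show False using A_digit B_digit by simp
qed

theorem theorem17:
  shows "infinite {N :: nat. N > 0 \<and>
           \<not> (\<exists>A B. antipalindromic A \<and> antipalindromic B \<and> A = N * B)}"
proof (rule infinite_super)
  show "range (\<lambda>m. (2::nat) ^ Suc m) \<subseteq> {N :: nat. N > 0 \<and>
           \<not> (\<exists>A B. antipalindromic A \<and> antipalindromic B \<and> A = N * B)}"
    using not_antipalindromic_two_power_mult[of "Suc _"] by (auto simp del: power_Suc)
  show "infinite (range (\<lambda>m. (2::nat) ^ Suc m))"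
    by (rule range_inj_infinite) (simp add: inj_def)
qed

end
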